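(* Let $\mathbb{K}\in\{\mathbb{R},\mathbb{C}\}$. Let $S_1,\dots,S_M$ be non-trivial, independent linear subspaces of $\mathbb{K}^m$ with dimensions $d_1,\dots,d_M$, $d_{\max}=\max_i d_i$, and $\mathcal{U}=\bigcup_{i=1}^M S_i$. Let $\mathbf{W}=[w_1\cdots w_n]\in\mathbb{K}^{m\times n}$ be a rank $r$ matrix whose columns are drawn from $\mathcal{U}$, such that the columns drawn from each $S_i$ form a generic set for $S_i$. Factor $\mathbf{W}=\mathbf{W}\mathbf{W}^\dagger\mathbf{W}$ and let $Q$ be either $\mathrm{bin}(\mathbf{W}^\dagger\mathbf{W})$ or $\mathrm{abs}(\mathbf{W}^\dagger\mathbf{W})$. Then $\Xi_{\mathbf{W}}=Q^{d_{\max}}$ is a similarity matrix for $\mathbf{W}$. Moreover, if $\mathbf{W}=U_r\Sigma_rV_r^*$ is the skinny singular value decomposition of $\mathbf{W}$, then $\mathbf{W}^\dagger\mathbf{W}=V_rV_r^*$.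
   Context: Subspaces are independent if $\dim(S_1+\dots+S_M)=\sum_i\dim S_i\le m$. Data drawn from a $d$-dimensional subspace $S$ is generic if it has more than $d$ elements and any $d$ of them form a basis of $S$. $\mathrm{abs}(A)(i,j)=|A(i,j)|$; $\mathrm{bin}(A)(i,j)=1$ if $A(i,j)\ne0$, else $0$. A similarity matrix for $\mathbf{W}$ is a symmetric matrix $\Xi$ with $\Xi(i,j)\neq0$ iff $w_i,w_j$ come from the same subspace $S_l$. The skinny SVD of a rank $r$ matrix is $U_r\Sigma_rV_r^*$ with $U_r$, $V_r$ the first $r$ left/right singular vectors and $\Sigma_r=\mathrm{diag}(\sigma_1,\dots,\sigma_r)$. $\dagger$ denotes the Moore--Penrose pseudoinverse. *)

theory Defs
  imports "HOL-Analysis.Analysis"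
begin

text \<open>Matrices are 'a^'n^'m (m rows, n columns), K = real or complex.
  The conjugation of the scalar field is passed explicitly as cj
  (identity for real, cnj for complex).\<close>

definition adj :: "('a \<Rightarrow> 'a) \<Rightarrow> 'a::field^'n^'m \<Rightarrow> 'a^'m^'n" where
  "adj cj A = (\<chi> i j. cj (A $ j $ i))"

definition is_pinv :: "('a \<Rightarrow> 'a) \<Rightarrow> 'a::field^'n^'m \<Rightarrow> 'a^'m^'n \<Rightarrow> bool" where
  "is_pinv cj A X \<longleftrightarrow> A ** X ** A = A \<and> X ** A ** X = X \<and>
     adj cj (A ** X) = A ** X \<and> adj cj (X ** A) = X ** A"

definition pinv :: "('a \<Rightarrow> 'a) \<Rightarrow> 'a::field^'n^'m \<Rightarrow> 'a^'m^'n" where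
  "pinv cj A = (THE X. is_pinv cj A X)"

definition mabs :: "'a::real_normed_field^'n^'m \<Rightarrow> 'a^'n^'m" where
  "mabs A = (\<chi> i j. of_real (norm (A $ i $ j)))"

definition mbin :: "'a::field^'n^'m \<Rightarrow> 'a^'n^'m" where
  "mbin A = (\<chi> i j. if A $ i $ j \<noteq> 0 then 1 else 0)"

fun mpow :: "'a::comm_ring_1^'n^'n \<Rightarrow> nat \<Rightarrow> 'a^'n^'n" where
  "mpow A 0 = mat 1"
| "mpow A (Suc k) = A ** mpow A k"

text \<open>Subspaces S 0, ..., S (M-1) are independent:
  dim (S_1 + ... + S_M) = sum of dims (the sum of subspaces is the span of their union).\<close>
definition independent_subspaces :: "nat \<Rightarrow> (nat \<Rightarrow> ('a::field^'m) set) \<Rightarrow> bool" where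
  "independent_subspaces M S \<longleftrightarrow>
     vec.dim (vec.span (\<Union>i<M. S i)) = (\<Sum>i<M. vec.dim (S i))"

definition generic_data :: "('a::field^'m) set \<Rightarrow> ('j \<Rightarrow> 'a^'m) \<Rightarrow> 'j set \<Rightarrow> bool" where
  "generic_data T x J \<longleftrightarrow> card J > vec.dim T \<and>
     (\<forall>J'. J' \<subseteq> J \<and> card J' = vec.dim T \<longrightarrow>
        inj_on x J' \<and> vec.independent (x ` J') \<and> vec.span (x ` J') = T)"

definition similarity_matrix ::
  "'a::field^'n^'n \<Rightarrow> 'a^'n^'m \<Rightarrow> nat \<Rightarrow> (nat \<Rightarrow> ('a^'m) set) \<Rightarrow> bool" where
  "similarity_matrix Xi W M S \<longleftrightarrow> transpose Xi = Xi \<and>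
     (\<forall>i j. Xi $ i $ j \<noteq> 0 \<longleftrightarrow>
        (\<exists>l<M. column i W \<in> S l \<and> column j W \<in> S l))"

definition skinny_svd :: "('a \<Rightarrow> 'a) \<Rightarrow> 'a::real_normed_field^'n^'m \<Rightarrow>
    'a^'r::{finite,linorder}^'m \<Rightarrow> ('r \<Rightarrow> real) \<Rightarrow> 'a^'r::{finite,linorder}^'n \<Rightarrow> bool" where
  "skinny_svd cj W U \<sigma> V \<longleftrightarrow> CARD('r) = rank W \<and>
     adj cj U ** U = mat 1 \<and> adj cj V ** V = mat 1 \<and>
     (\<forall>i. \<sigma> i > 0) \<and> (\<forall>i j. i \<le> j \<longrightarrow> \<sigma> j \<le> \<sigma> i) \<and>
     W = U ** (\<chi> i j. if i = j then of_real (\<sigma> i) else 0) ** adj cj V"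

end

(*
  P = W\<^sup>+W is the orthogonal projection onto the row space of W; its entries are the
  inner products P i j = <u j, u i> of the vectors u j = W\<^sup>+ w j, and W u j = w j.
  Independence of the subspaces makes P block diagonal: the part of u j outside the
  cluster of w j is mapped by W into S l \<inter> span (other S i) = 0, so it lies in ker W,
  to which u j is orthogonal.  Since W\<^sup>+ is injective on each S l, the u j of one
  cluster are again generic in a d_l-dimensional space, and for generic vectors the
  non-orthogonality graph has diameter at most d_l: a set of at most d_l vertices always
  has an edge leaving it, and every vertex is adjacent to some member of any d_l of them.
  The nonzero pattern of Q^dmax records the paths of length dmax in this graph.  For the
  SVD, V \<Sigma>\<^sup>-\<^sup>1 U* satisfies the Penrose conditions.
*)
theory Submission
  imports Defs
begin

section \<open>Independent subspaces\<close>

lemma dim_span_Un_Int: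
  "vec.dim (vec.span (A \<union> B)) + vec.dim (vec.span A \<inter> vec.span B) = vec.dim A + vec.dim B"
  for A B :: "('a::field^'m) set"
  using vec.dim_sums_Int[OF vec.subspace_span vec.subspace_span, of A B]
  by (simp add: vec.span_Un)

lemma dim_span_UN_le:
  fixes S :: "'i \<Rightarrow> ('a::field^'m) set"
  assumes "finite I"
  shows "vec.dim (vec.span (\<Union>i\<in>I. S i)) \<le> (\<Sum>i\<in>I. vec.dim (S i))"
  using assms
proof (induction I rule: finite_induct)
  case (insert a I)
  have "vec.dim (vec.span (S a \<union> (\<Union>i\<in>I. S i))) \<le> vec.dim (S a) + vec.dim (\<Union>i\<in>I. S i)"
    using dim_span_Un_Int[of "S a" "\<Union>i\<in>I. S i"] by linarith
  also have "\<dots> \<le> vec.dim (S a) + (\<Sum>i\<in>I. vec.dim (S i))"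
    using insert.IH by simp
  finally show ?case using insert by simp
qed simp

lemma independent_subspaces_Int_span:
  fixes S :: "nat \<Rightarrow> ('a::field^'m) set"
  assumes "\<forall>i<M. vec.subspace (S i)" and "independent_subspaces M S" and "l < M"
  shows "S l \<inter> vec.span (\<Union>i\<in>{..<M} - {l}. S i) \<subseteq> {0}"
proof -
  define U where "U = (\<Union>i\<in>{..<M} - {l}. S i)"
  have "(\<Union>i<M. S i) = S l \<union> U"
    using \<open>l < M\<close> by (auto simp: U_def)
  moreover have "(\<Sum>i<M. vec.dim (S i)) = vec.dim (S l) + (\<Sum>i\<in>{..<M} - {l}. vec.dim (S i))"
    using \<open>l < M\<close> by (simp add: sum.remove)
  ultimately have "vec.dim (vec.span (S l \<union> U)) = vec.dim (S l) + (\<Sum>i\<in>{..<M} - {l}. vec.dim (S i))"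
    using assms(2) by (simp add: independent_subspaces_def)
  moreover have "vec.dim U \<le> (\<Sum>i\<in>{..<M} - {l}. vec.dim (S i))"
    using dim_span_UN_le[of "{..<M} - {l}" S] by (simp add: U_def)
  moreover have "vec.dim (vec.span (S l \<union> U)) + vec.dim (vec.span (S l) \<inter> vec.span U)
      = vec.dim (S l) + vec.dim U"
    by (rule dim_span_Un_Int)
  ultimately have "vec.dim (vec.span (S l) \<inter> vec.span U) = 0"
    by linarith
  moreover have "vec.span (S l) = S l"
    using assms(1,3) by (simp add: vec.span_eq_iff)
  ultimately show ?thesis
    by (simp add: U_def)
qed

section \<open>Generic data\<close>

lemma finite_subset_card_between:
  assumes "finite J" "B \<subseteq> J" "card B \<le> n" "n \<le> card J"
  obtains F where "B \<subseteq> F" "F \<subseteq> J" "card F = n"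
proof -
  have "n - card B \<le> card (J - B)"
    using assms by (simp add: card_Diff_subset finite_subset)
  then obtain C where C: "C \<subseteq> J - B" "card C = n - card B"
    by (rule obtain_subset_with_card_n)
  have "finite B" "finite C"
    using assms(1,2) C(1) by (auto intro: finite_subset)
  then have "card (B \<union> C) = n"
    using assms(3) C by (subst card_Un_disjoint) auto
  then show thesis
    using that[of "B \<union> C"] C assms by auto
qed

lemma generic_dataD:
  assumes "generic_data T x J" "F \<subseteq> J" "card F = vec.dim T"
  shows "inj_on x F" "vec.independent (x ` F)" "vec.span (x ` F) = T"
  using assms by (auto simp: generic_data_def)

lemma generic_data_card: "generic_data T x J \<Longrightarrow> vec.dim T < card J"
  by (simp add: generic_data_def)

lemma generic_data_finite: "generic_data T x J \<Longrightarrow> finite J"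
  by (auto simp: generic_data_def intro: card_ge_0_finite)

lemma generic_data_basis_containing:
  assumes gen: "generic_data T x J" and "0 < vec.dim T" and "j \<in> J"
  obtains F where "j \<in> F" "F \<subseteq> J" "card F = vec.dim T"
proof -
  have "{j} \<subseteq> J" "card {j} \<le> vec.dim T" "vec.dim T \<le> card J"
    using generic_data_card[OF gen] assms(2,3) by auto
  then obtain F where "{j} \<subseteq> F" "F \<subseteq> J" "card F = vec.dim T"
    by (rule finite_subset_card_between[OF generic_data_finite[OF gen]])
  then show thesis
    using that by simp
qed

lemma generic_data_in_span:
  assumes gen: "generic_data T x J" and "0 < vec.dim T"
    and "F \<subseteq> J" "card F = vec.dim T" "j \<in> J"
  shows "x j \<in> vec.span (x ` F)"
proof -
  obtain F' where "j \<in> F'" "F' \<subseteq> J" "card F' = vec.dim T"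
    using generic_data_basis_containing[OF gen assms(2,5)] .
  then have "x j \<in> vec.span (x ` F')"
    by (intro vec.span_base) simp
  also have "vec.span (x ` F') = vec.span (x ` F)"
    using generic_dataD(3)[OF gen] \<open>F' \<subseteq> J\<close> \<open>card F' = vec.dim T\<close> assms(3,4) by simp
  finally show ?thesis .
qed

lemma generic_data_nonzero:
  assumes gen: "generic_data T x J" and "0 < vec.dim T" and "j \<in> J"
  shows "x j \<noteq> 0"
proof -
  obtain F where "j \<in> F" "F \<subseteq> J" "card F = vec.dim T"
    using generic_data_basis_containing[OF gen assms(2,3)] .
  then have "vec.independent (x ` F)" "x j \<in> x ` F"
    using generic_dataD(2)[OF gen] by auto
  then show ?thesis
    using vec.dependent_zero[of "x ` F"] by auto
qed

lemma matrix_left_inverse_on_span: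
  assumes "\<And>v. v \<in> X \<Longrightarrow> A *v (B *v v) = v" and "t \<in> vec.span X"
  shows "A *v (B *v t) = t"
proof -
  have "(A ** B - mat 1) *v t = 0"
    using assms(2)
  proof (rule vec.eq_0_on_span[rotated])
    show "(A ** B - mat 1) *v v = 0" if "v \<in> X" for v
      using assms(1)[OF that]
      by (simp add: matrix_vector_mult_diff_rdistrib matrix_vector_mul_assoc)
  qed
  then show ?thesis
    by (simp add: matrix_vector_mult_diff_rdistrib matrix_vector_mul_assoc)
qed

lemma generic_data_linear_image:
  fixes A :: "'a::field^'k^'m" and B :: "'a^'m^'k"
  assumes gen: "generic_data T x J" and AB: "\<And>j. j \<in> J \<Longrightarrow> A *v (B *v x j) = x j"
  shows "generic_data ((*v) B ` T) (\<lambda>j. B *v x j) J"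
    and "vec.dim ((*v) B ` T) = vec.dim T"
proof -
  have "vec.dim T \<le> card J"
    using generic_data_card[OF gen] by simp
  then obtain F where "F \<subseteq> J" "card F = vec.dim T" "finite F"
    by (rule obtain_subset_with_card_n)
  then have T_span: "T = vec.span (x ` F)"
    using generic_dataD(3)[OF gen] by simp
  have AB_T: "A *v (B *v t) = t" if "t \<in> T" for t
  proof (rule matrix_left_inverse_on_span)
    show "A *v (B *v v) = v" if "v \<in> x ` F" for v
      using that \<open>F \<subseteq> J\<close> AB by auto
    show "t \<in> vec.span (x ` F)"
      using that T_span by simp
  qed
  then have inj_T: "inj_on ((*v) B) T"
    by (rule inj_on_inverseI)
  show dim_eq: "vec.dim ((*v) B ` T) = vec.dim T"
    using inj_T by (intro vec.dim_image_eq) (simp_all add: T_span vec.span_span)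
  show "generic_data ((*v) B ` T) (\<lambda>j. B *v x j) J"
    unfolding generic_data_def dim_eq
  proof (intro conjI allI impI)
    show "vec.dim T < card J"
      using generic_data_card[OF gen] .
    fix F' assume F': "F' \<subseteq> J \<and> card F' = vec.dim T"
    then have x_F': "inj_on x F'" "vec.independent (x ` F')" "vec.span (x ` F') = T"
      using generic_dataD[OF gen] by auto
    have image_F': "(\<lambda>j. B *v x j) ` F' = (*v) B ` (x ` F')"
      by auto
    show "inj_on (\<lambda>j. B *v x j) F'"
    proof (rule inj_onI)
      fix a b assume ab: "a \<in> F'" "b \<in> F'" "B *v x a = B *v x b"
      then have "x a = x b"
        using AB F' by (metis subsetD)
      then show "a = b"
        using inj_onD[OF x_F'(1)] ab by blast
    qed
    show "vec.independent ((\<lambda>j. B *v x j) ` F')"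
      unfolding image_F' using x_F' inj_T by (intro vec.independent_injective_image) simp_all
    show "vec.span ((\<lambda>j. B *v x j) ` F') = (*v) B ` T"
      unfolding image_F' vec.span_image x_F'(3) ..
  qed
qed

section \<open>Paths and powers of nonnegative matrices\<close>

lemma relpowp_mono_refl:
  assumes "G y y" "(G ^^ k) x y" "k \<le> k'"
  shows "(G ^^ k') x y"
  using assms(3)
proof (induction k' rule: dec_induct)
  case (step k')
  then show ?case using relpowp_Suc_I assms(1) by metis
qed (fact assms(2))

lemma relpowp_invariant:
  assumes "\<And>a b. G a b \<Longrightarrow> Q a \<Longrightarrow> Q b" "(G ^^ k) x y" "Q x"
  shows "Q y"
  using assms(2)
proof (induction k arbitrary: y)
  case (Suc k)
  then show ?case using assms(1) by (metis relpowp_Suc_E)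
qed (simp add: assms(3))

lemma mpow_comm: "mpow A k ** A = A ** mpow A k"
  by (induction k) (simp_all add: matrix_mul_assoc[symmetric])

lemma mpow_transpose: "transpose A = A \<Longrightarrow> transpose (mpow A k) = mpow A k"
  by (induction k) (simp_all add: matrix_transpose_mul mpow_comm)

lemma mpow_of_real:
  "mpow (\<chi> i j. of_real (q $ i $ j) :: 'a::{comm_ring_1,real_algebra_1}^'n^'n) k
     = (\<chi> i j. of_real (mpow q k $ i $ j))"
  by (induction k) (simp_all add: matrix_matrix_mult_def mat_def vec_eq_iff of_real_sum)

lemma mpow_nonneg:
  fixes q :: "real^'n^'n"
  assumes "\<And>i j. 0 \<le> q $ i $ j"
  shows "0 \<le> mpow q k $ i $ j"
  by (induction k arbitrary: i j) (simp_all add: matrix_matrix_mult_def mat_def assms sum_nonneg)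

lemma mpow_nonneg_neq_0_iff:
  fixes q :: "real^'n^'n"
  assumes "\<And>i j. 0 \<le> q $ i $ j"
  shows "mpow q k $ i $ j \<noteq> 0 \<longleftrightarrow> ((\<lambda>a b. q $ a $ b \<noteq> 0) ^^ k) i j"
proof (induction k arbitrary: i)
  case (Suc k)
  have "mpow q (Suc k) $ i $ j = 0 \<longleftrightarrow> (\<forall>l. q $ i $ l * mpow q k $ l $ j = 0)"
    using assms mpow_nonneg[OF assms]
    by (simp add: matrix_matrix_mult_def sum_nonneg_eq_0_iff)
  then show ?case
    using Suc by (auto simp: relpowp_Suc_left OO_def simp del: relpowp.simps)
qed (simp add: mat_def)

section \<open>Inner products, adjoints and the Moore-Penrose inverse\<close>

locale conjugation =
  fixes cj :: "'a::real_normed_field \<Rightarrow> 'a"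
  assumes cj_add: "cj (x + y) = cj x + cj y"
  and cj_mult: "cj (x * y) = cj x * cj y"
  and cj_cj: "cj (cj x) = x"
  and cj_of_real: "cj (of_real r) = of_real r"
  and mult_cj: "x * cj x = of_real ((norm x)\<^sup>2)"
  and norm_cj: "norm (cj x) = norm x"
begin

lemma cj_0 [simp]: "cj 0 = 0"
  using cj_of_real[of 0] by simp

lemma cj_sum: "cj (sum f A) = (\<Sum>x\<in>A. cj (f x))"
  by (induction A rule: infinite_finite_induct) (auto simp: cj_add)

lemma cj_minus: "cj (- x) = - cj x"
  using cj_add[of x "- x"] by (simp add: eq_neg_iff_add_eq_0 add.commute)

lemma cj_diff: "cj (x - y) = cj x - cj y"
  using cj_add[of x "- y"] by (simp add: cj_minus)

lemma cj_eq_0_iff [simp]: "cj x = 0 \<longleftrightarrow> x = 0"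
  by (metis cj_0 cj_cj)

lemmas cj_simps [simp] = cj_add cj_mult cj_cj cj_sum cj_minus cj_diff cj_of_real

definition cinner :: "'a^'n \<Rightarrow> 'a^'n \<Rightarrow> 'a" where
  "cinner x y = (\<Sum>k\<in>UNIV. x $ k * cj (y $ k))"

lemma cinner_commute: "cinner y x = cj (cinner x y)"
  by (simp add: cinner_def mult.commute)

lemma cinner_eq_0_commute: "cinner y x = 0 \<longleftrightarrow> cinner x y = 0"
  by (simp add: cinner_commute[of y x])

lemma cinner_diff_left: "cinner (x - y) z = cinner x z - cinner y z"
  by (simp add: cinner_def left_diff_distrib sum_subtractf)

lemma cinner_diff_right: "cinner z (x - y) = cinner z x - cinner z y"
  by (simp add: cinner_def right_diff_distrib sum_subtractf)

lemma cinner_zero_left [simp]: "cinner 0 z = 0"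
  by (simp add: cinner_def)

lemma cinner_zero_right [simp]: "cinner z 0 = 0"
  by (simp add: cinner_def)

lemma cinner_self_eq_0 [simp]: "cinner x x = 0 \<longleftrightarrow> x = 0"
proof
  assume "cinner x x = 0"
  moreover have "cinner x x = of_real (\<Sum>k\<in>UNIV. (norm (x $ k))\<^sup>2)"
    by (simp only: cinner_def mult_cj of_real_sum)
  ultimately have "(\<Sum>k\<in>UNIV. (norm (x $ k))\<^sup>2) = 0"
    by (simp only: of_real_eq_0_iff)
  then have "\<forall>k. norm (x $ k) = 0"
    by (subst (asm) sum_nonneg_eq_0_iff) auto
  then show "x = 0" by (simp add: vec_eq_iff)
qed simp

lemma cinner_orthogonal_span:
  assumes "\<And>y. y \<in> Y \<Longrightarrow> cinner x y = 0" and "z \<in> vec.span Y"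
  shows "cinner x z = 0"
  using assms(2)
proof (induction rule: vec.span_induct_alt)
  case (step c y z)
  then show ?case
    by (simp add: cinner_def distrib_left sum.distrib mult.left_commute
        flip: sum_distrib_left) (simp add: assms(1) flip: cinner_def)
qed simp

lemma cinner_orthogonal_span_left:
  assumes "\<And>y. y \<in> Y \<Longrightarrow> cinner y x = 0" and "z \<in> vec.span Y"
  shows "cinner z x = 0"
  using cinner_orthogonal_span[of Y x z] assms by (simp add: cinner_eq_0_commute)

lemma span_Un_orthogonal:
  assumes "z \<in> vec.span (X \<union> Y)"
    and "\<And>x y. x \<in> X \<Longrightarrow> y \<in> Y \<Longrightarrow> cinner y x = 0"
    and "\<And>x. x \<in> X \<Longrightarrow> cinner z x = 0"
  shows "z \<in> vec.span Y"
proof -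
  obtain v v' where split: "z = v + v'" "v \<in> vec.span X" "v' \<in> vec.span Y"
    using assms(1) unfolding vec.span_Un by blast
  have "cinner v x = 0" if "x \<in> X" for x
  proof -
    have "cinner v' x = 0"
      using assms(2)[OF that] by (rule cinner_orthogonal_span_left[OF _ \<open>v' \<in> vec.span Y\<close>])
    then show ?thesis
      using assms(3)[OF that] cinner_diff_left[of z v' x] split(1) by simp
  qed
  then have "cinner v v = 0"
    by (rule cinner_orthogonal_span[OF _ \<open>v \<in> vec.span X\<close>])
  then show ?thesis
    using split by simp
qed

lemma adj_adj [simp]: "adj cj (adj cj A) = A"
  by (simp add: adj_def vec_eq_iff)

lemma adj_mult: "adj cj (A ** B) = adj cj B ** adj cj A"
  by (simp add: adj_def matrix_matrix_mult_def vec_eq_iff mult.commute)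

lemma cinner_adj_right: "cinner (A *v x) y = cinner x (adj cj A *v y)"
proof -
  have "cinner (A *v x) y = (\<Sum>k\<in>UNIV. \<Sum>j\<in>UNIV. A $ k $ j * x $ j * cj (y $ k))"
    by (simp add: cinner_def matrix_vector_mult_def sum_distrib_right)
  also have "\<dots> = (\<Sum>j\<in>UNIV. \<Sum>k\<in>UNIV. A $ k $ j * x $ j * cj (y $ k))"
    by (rule sum.swap)
  also have "\<dots> = cinner x (adj cj A *v y)"
    by (simp add: cinner_def matrix_vector_mult_def adj_def sum_distrib_left mult_ac)
  finally show ?thesis .
qed

lemma adj_eqI:
  assumes "\<And>x y. cinner (A *v x) y = cinner x (B *v y)"
  shows "adj cj A = B"
proof -
  have "adj cj A *v y = B *v y" for y
  proof -
    let ?z = "adj cj A *v y - B *v y"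
    have "cinner ?z ?z = 0"
      using assms[of ?z y] by (simp add: cinner_diff_right cinner_adj_right)
    then show ?thesis by simp
  qed
  then show ?thesis by (simp add: matrix_eq)
qed

lemma adj_mult_self_kernel:
  assumes "(adj cj A ** A) *v x = 0"
  shows "A *v x = 0"
proof -
  have "cinner (A *v x) (A *v x) = cinner x ((adj cj A ** A) *v x)"
    by (simp add: cinner_adj_right matrix_vector_mul_assoc)
  then show ?thesis using assms by simp
qed

lemma range_adj_orthogonal_kernel:
  assumes "r \<in> range ((*v) (adj cj A))" and "A *v z = 0"
  shows "cinner r z = 0"
  using assms by (auto simp: cinner_adj_right)

lemma normal_equation_unique_solution:
  "\<exists>!x. x \<in> range ((*v) (adj cj A)) \<and> (adj cj A ** A) *v x = adj cj A *v y"
proof -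
  define R where "R = range ((*v) (adj cj A))"
  let ?f = "(*v) (adj cj A ** A)"
  have "vec.subspace R"
    unfolding R_def using vec.subspace_image[OF vec.subspace_UNIV] by simp
  then have span_R: "vec.span R = R"
    by (simp add: vec.span_eq_iff)
  have inj_R: "inj_on ?f R"
  proof (rule inj_onI)
    fix x x' assume "x \<in> R" "x' \<in> R" "?f x = ?f x'"
    then have "x - x' \<in> R" "?f (x - x') = 0"
      using \<open>vec.subspace R\<close> by (auto simp: vec.subspace_diff vec.diff)
    then have "A *v (x - x') = 0"
      using adj_mult_self_kernel by blast
    with \<open>x - x' \<in> R\<close> have "cinner (x - x') (x - x') = 0"
      unfolding R_def by (rule range_adj_orthogonal_kernel)
    then show "x = x'" by simp
  qed
  have "?f ` R \<subseteq> R"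
    unfolding R_def by (auto simp: matrix_vector_mul_assoc[symmetric])
  moreover have "vec.dim (?f ` R) = vec.dim R"
    using inj_R by (intro vec.dim_image_eq) (simp_all add: span_R)
  ultimately have "?f ` R = R"
    by (intro vec.subspace_dim_equal vec.subspace_image \<open>vec.subspace R\<close>) simp_all
  moreover have "adj cj A *v y \<in> R"
    unfolding R_def by simp
  ultimately obtain x where x: "x \<in> R" "?f x = adj cj A *v y"
    by (metis imageE)
  show ?thesis
  proof (rule ex1I)
    show "x \<in> range ((*v) (adj cj A)) \<and> ?f x = adj cj A *v y"
      using x by (simp add: R_def)
    show "x' = x" if "x' \<in> range ((*v) (adj cj A)) \<and> ?f x' = adj cj A *v y" for x'
      using inj_onD[OF inj_R, of x' x] that x by (simp add: R_def)
  qed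
qed

lemma normal_equation_solution_matrix:
  fixes A :: "'a^'n^'m"
  obtains X :: "'a^'m^'n" where
    "\<And>y. X *v y \<in> range ((*v) (adj cj A))"
    "\<And>y. (adj cj A ** A) *v (X *v y) = adj cj A *v y"
proof -
  define R where "R = range ((*v) (adj cj A))"
  define sol where
    "sol y = (THE x. x \<in> R \<and> (adj cj A ** A) *v x = adj cj A *v y)" for y
  have sol: "sol y \<in> R \<and> (adj cj A ** A) *v sol y = adj cj A *v y" for y
    unfolding sol_def R_def by (rule theI'[OF normal_equation_unique_solution])
  have "vec.subspace R"
    unfolding R_def using vec.subspace_image[OF vec.subspace_UNIV] by simp
  define X where "X = (\<chi> i j. sol (axis j 1) $ i)"
  have X_expansion: "X *v y = (\<Sum>j\<in>UNIV. y $ j *s sol (axis j 1))" for y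
    by (simp add: matrix_mult_sum X_def column_def)
  show thesis
  proof
    show "X *v y \<in> range ((*v) (adj cj A))" for y
      unfolding X_expansion R_def[symmetric] using \<open>vec.subspace R\<close> sol
      by (intro vec.subspace_sum vec.subspace_scale) auto
    show "(adj cj A ** A) *v (X *v y) = adj cj A *v y" for y
    proof -
      have "(adj cj A ** A) *v (X *v y) = adj cj A *v (\<Sum>j\<in>UNIV. y $ j *s axis j 1)"
        by (simp add: X_expansion vec.sum vec.scale sol)
      then show ?thesis by (simp add: basis_expansion)
    qed
  qed
qed

lemma self_adjointI_orthogonal_residual:
  assumes "\<And>x y. cinner (H *v x) (y - H *v y) = 0"
  shows "adj cj H = H"
proof (rule adj_eqI)
  have proj: "cinner (H *v x) y = cinner (H *v x) (H *v y)" for x y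
    using assms[of x y] by (simp add: cinner_diff_right)
  show "cinner (H *v x) y = cinner x (H *v y)" for x y
    using proj[of x y] proj[of y x] cinner_commute by metis
qed

lemma pinv_exists: "\<exists>X. is_pinv cj A X"
proof -
  let ?N = "adj cj A"
  (* X y solves the normal equations inside range A\<^sup>*, which is orthogonal to
     ker A = ker (A\<^sup>* A). *)
  obtain X where X_range: "\<And>y. X *v y \<in> range ((*v) ?N)"
    and X_normal: "\<And>y. (?N ** A) *v (X *v y) = ?N *v y"
    using normal_equation_solution_matrix[of A] by blast
  have AXA: "A *v (X *v (A *v x)) = A *v x" for x
  proof -
    have "(?N ** A) *v (X *v (A *v x) - x) = 0"
      using X_normal[of "A *v x"] by (simp add: vec.diff matrix_vector_mul_assoc)
    then show ?thesis
      by (metis adj_mult_self_kernel eq_iff_diff_eq_0 vec.diff)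
  qed
  have XAX: "X *v (A *v (X *v y)) = X *v y" for y
    using normal_equation_unique_solution[of A "A *v (X *v y)"] X_range X_normal
    by (metis matrix_vector_mul_assoc)
  have AX_residual: "cinner (A *v (X *v x)) (y - A *v (X *v y)) = 0" for x y
  proof -
    have "?N *v (y - A *v (X *v y)) = 0"
      using X_normal[of y] by (simp add: vec.diff matrix_vector_mul_assoc matrix_mul_assoc[symmetric])
    then show ?thesis by (simp add: cinner_adj_right)
  qed
  have XA_residual: "cinner (X *v (A *v x)) (y - X *v (A *v y)) = 0" for x y
    using X_range AXA by (intro range_adj_orthogonal_kernel[of _ A]) (auto simp: vec.diff)
  have "is_pinv cj A X"
    unfolding is_pinv_def
  proof (intro conjI)
    show "A ** X ** A = A"
      using AXA by (simp add: matrix_eq matrix_vector_mul_assoc matrix_mul_assoc)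
    show "X ** A ** X = X"
      using XAX by (simp add: matrix_eq matrix_vector_mul_assoc matrix_mul_assoc)
    show "adj cj (A ** X) = A ** X"
      using AX_residual
      by (intro self_adjointI_orthogonal_residual) (simp add: matrix_vector_mul_assoc)
    show "adj cj (X ** A) = X ** A"
      using XA_residual
      by (intro self_adjointI_orthogonal_residual) (simp add: matrix_vector_mul_assoc)
  qed
  then show ?thesis ..
qed

lemma pinv_unique:
  fixes A :: "'a^'n^'m"
  assumes "is_pinv cj A X" "is_pinv cj A Y"
  shows "X = Y"
proof -
  from assms have penrose: "A ** X ** A = A" "X ** A ** X = X" "adj cj (A ** X) = A ** X"
      "adj cj (X ** A) = X ** A" "A ** Y ** A = A" "Y ** A ** Y = Y"
      "adj cj (A ** Y) = A ** Y" "adj cj (Y ** A) = Y ** A"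
    unfolding is_pinv_def by auto
  have adj_A_right: "adj cj A = adj cj A ** A ** Y"
  proof -
    have "adj cj A = adj cj (A ** Y ** A)" using penrose by simp
    also have "\<dots> = adj cj A ** adj cj (A ** Y)" by (simp add: adj_mult matrix_mul_assoc)
    finally show ?thesis using penrose by (simp add: matrix_mul_assoc)
  qed
  have adj_A_left: "adj cj A = X ** A ** adj cj A"
  proof -
    have "adj cj A = adj cj (A ** X ** A)" using penrose by simp
    also have "\<dots> = adj cj (X ** A) ** adj cj A" by (simp add: adj_mult matrix_mul_assoc)
    finally show ?thesis using penrose by (simp add: matrix_mul_assoc)
  qed
  have "X = X ** (A ** X)" using penrose by (simp add: matrix_mul_assoc)
  also have "\<dots> = X ** adj cj X ** adj cj A" using penrose by (metis adj_mult matrix_mul_assoc)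
  also have "\<dots> = X ** adj cj X ** adj cj A ** A ** Y" using adj_A_right by (metis matrix_mul_assoc)
  also have "\<dots> = X ** adj cj (A ** X) ** A ** Y" by (simp add: adj_mult matrix_mul_assoc)
  also have "\<dots> = X ** A ** Y" using penrose by (simp add: matrix_mul_assoc)
  finally have X_eq: "X = X ** A ** Y" .
  have "Y = (Y ** A) ** Y" using penrose by simp
  also have "\<dots> = adj cj A ** adj cj Y ** Y" using penrose by (metis adj_mult)
  also have "\<dots> = X ** A ** adj cj A ** adj cj Y ** Y" using adj_A_left by (metis matrix_mul_assoc)
  also have "\<dots> = X ** A ** adj cj (Y ** A) ** Y" by (simp add: adj_mult matrix_mul_assoc)
  also have "\<dots> = X ** A ** Y" using penrose by (metis penrose(6) matrix_mul_assoc)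
  finally show ?thesis using X_eq by simp
qed

lemma is_pinv_pinv: "is_pinv cj A (pinv cj A)"
  unfolding pinv_def using pinv_exists[of A] pinv_unique[of A]
  by (metis theI)

lemma pinv_eqI: "is_pinv cj A X \<Longrightarrow> pinv cj A = X"
  using is_pinv_pinv pinv_unique by blast

lemma diag_matrix_mult:
  "((\<chi> i j. if i = j then a i else 0) :: 'b::comm_semiring_1^'r^'r) ** (\<chi> i j. if i = j then b i else 0)
   = (\<chi> i j. if i = j then a i * b i else 0)"
proof -
  have "(\<Sum>k\<in>UNIV. (if i = k then a i else 0) * (if k = j then b k else 0)) =
        (if i = j then a i * b i else 0)" for i j :: 'r
  proof -
    have "(\<Sum>k\<in>UNIV. (if i = k then a i else 0) * (if k = j then b k else 0)) =
          (\<Sum>k\<in>UNIV. if k = i then a i * (if i = j then b i else 0) else 0)"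
      by (rule sum.cong) auto
    also have "\<dots> = a i * (if i = j then b i else 0)" by (subst sum.delta) auto
    finally show ?thesis by simp
  qed
  then show ?thesis by (simp add: matrix_matrix_mult_def vec_eq_iff)
qed

lemma pinv_mult_svd:
  fixes W :: "'a^'n^'m" and U :: "'a^'r^'m" and V :: "'a^'r^'n"
  assumes u: "adj cj U ** U = mat 1" and v: "adj cj V ** V = mat 1" and s: "\<forall>i. \<sigma> i > 0"
    and w: "W = U ** (\<chi> i j. if i = j then of_real (\<sigma> i) else 0) ** adj cj V"
  shows "pinv cj W ** W = V ** adj cj V"
proof -
  define D :: "'a^'r^'r" where "D = (\<chi> i j. if i = j then of_real (\<sigma> i) else 0)"
  define D' :: "'a^'r^'r" where "D' = (\<chi> i j. if i = j then of_real (1 / \<sigma> i) else 0)"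
  have "of_real (\<sigma> i) * of_real (1 / \<sigma> i) = (1 :: 'a)" for i
    using s[rule_format, of i] by (simp flip: of_real_mult)
  then have dd: "D ** D' = mat 1" "D' ** D = mat 1"
    unfolding D_def D'_def diag_matrix_mult by (simp_all add: mat_def vec_eq_iff mult.commute)
  have uu: "adj cj U ** (U ** Z) = Z" for Z :: "'a^'k^'r"
    by (simp add: matrix_mul_assoc u)
  have vv: "adj cj V ** (V ** Z) = Z" for Z :: "'a^'k^'r"
    by (simp add: matrix_mul_assoc v)
  have d1: "D ** (D' ** Z) = Z" for Z :: "'a^'k^'r"
    by (simp add: matrix_mul_assoc dd)
  have d2: "D' ** (D ** Z) = Z" for Z :: "'a^'k^'r"
    by (simp add: matrix_mul_assoc dd)
  have wD: "W = U ** (D ** adj cj V)" using w by (simp add: D_def matrix_mul_assoc)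
  define X where "X = V ** (D' ** adj cj U)"
  have WX: "W ** X = U ** adj cj U"
    by (simp add: wD X_def matrix_mul_assoc[symmetric] vv d1)
  have XW: "X ** W = V ** adj cj V"
    by (simp add: wD X_def matrix_mul_assoc[symmetric] uu d2)
  have "is_pinv cj W X"
    unfolding is_pinv_def
  proof (intro conjI)
    show "W ** X ** W = W" unfolding WX
      by (simp add: wD matrix_mul_assoc[symmetric] uu)
    show "X ** W ** X = X" unfolding XW
      by (simp add: X_def matrix_mul_assoc[symmetric] vv)
    show "adj cj (W ** X) = W ** X" unfolding WX by (simp add: adj_mult)
    show "adj cj (X ** W) = X ** W" unfolding XW by (simp add: adj_mult)
  qed
  then have "pinv cj W = X" by (rule pinv_eqI)
  then show ?thesis using XW by simp
qed

section \<open>The non-orthogonality graph of generic data\<close>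

lemma generic_data_nonorthogonal_to_basis:
  assumes gen: "generic_data T u J" and "0 < vec.dim T"
    and "F \<subseteq> J" "card F = vec.dim T" "g \<in> J"
  shows "\<exists>f\<in>F. cinner (u f) (u g) \<noteq> 0"
proof (rule ccontr)
  assume "\<not> ?thesis"
  then have "cinner (u g) y = 0" if "y \<in> u ` F" for y
    using that by (auto simp: cinner_eq_0_commute)
  then have "cinner (u g) (u g) = 0"
    using generic_data_in_span[OF assms] by (rule cinner_orthogonal_span)
  then show False
    using generic_data_nonzero[OF gen \<open>0 < vec.dim T\<close> \<open>g \<in> J\<close>] by simp
qed

lemma generic_data_not_in_span_remove:
  assumes gen: "generic_data T u J" and "0 < vec.dim T"
    and "F \<subseteq> J" "card F = vec.dim T" "f \<in> F" "g \<in> J" "g \<notin> F"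
  shows "u g \<notin> vec.span (u ` (F - {f}))"
proof -
  define F' where "F' = insert g (F - {f})"
  have "finite F"
    using \<open>F \<subseteq> J\<close> generic_data_finite[OF gen] by (rule finite_subset)
  then have "card F' = vec.dim T"
    using assms(2,4,5,7) by (simp add: F'_def card_Diff_singleton)
  moreover have "F' \<subseteq> J"
    using assms(3,6) by (auto simp: F'_def)
  ultimately have "inj_on u F'" "vec.independent (u ` F')"
    using generic_dataD[OF gen] by auto
  moreover have "u g \<notin> u ` (F - {f})"
    using inj_on_image_mem_iff[OF \<open>inj_on u F'\<close>, of g "F - {f}"] \<open>g \<notin> F\<close>
    by (auto simp: F'_def)
  ultimately show ?thesis
    by (simp add: F'_def vec.independent_insert)
qed

(* Otherwise, for g outside a basis-sized F \<supseteq> B, the component of u g in span (u ` B)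
   is orthogonal to u ` B and vanishes, so u g depends on d - 1 of the u f. *)
lemma generic_data_nonorthogonal_boundary:
  assumes gen: "generic_data T u J" and "0 < vec.dim T"
    and "B \<subseteq> J" "B \<noteq> {}" "card B \<le> vec.dim T"
  shows "\<exists>h\<in>B. \<exists>g\<in>J - B. cinner (u h) (u g) \<noteq> 0"
proof (rule ccontr)
  assume "\<not> ?thesis"
  then have orth: "cinner (u g) (u h) = 0" if "h \<in> B" "g \<in> J - B" for h g
    using that by (auto simp: cinner_eq_0_commute)
  have "vec.dim T < card J"
    using generic_data_card[OF gen] .
  then obtain F where F: "B \<subseteq> F" "F \<subseteq> J" "card F = vec.dim T"
    using finite_subset_card_between[OF generic_data_finite[OF gen] \<open>B \<subseteq> J\<close>
        \<open>card B \<le> vec.dim T\<close>] by auto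
  moreover have "F \<noteq> J"
    using F(3) \<open>vec.dim T < card J\<close> by auto
  ultimately obtain g where g: "g \<in> J" "g \<notin> F"
    by blast
  have "u ` B \<union> u ` (F - B) = u ` F"
    using F(1) by blast
  then have "u g \<in> vec.span (u ` B \<union> u ` (F - B))"
    using generic_data_in_span[OF gen \<open>0 < vec.dim T\<close> F(2,3) g(1)] by (simp only:)
  then have "u g \<in> vec.span (u ` (F - B))"
  proof (rule span_Un_orthogonal)
    show "cinner y x = 0" if "x \<in> u ` B" "y \<in> u ` (F - B)" for x y
      using that F(2) orth by auto
    show "cinner (u g) x = 0" if "x \<in> u ` B" for x
      using that g F(1) orth by auto
  qed
  moreover obtain f where "f \<in> B"
    using \<open>B \<noteq> {}\<close> by blast
  then have "vec.span (u ` (F - B)) \<subseteq> vec.span (u ` (F - {f}))"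
    by (intro vec.span_mono image_mono) auto
  ultimately show False
    using generic_data_not_in_span_remove[OF gen \<open>0 < vec.dim T\<close> F(2,3) _ g] F(1) \<open>f \<in> B\<close>
    by blast
qed

lemma generic_data_path_ball_card:
  assumes gen: "generic_data T u J" and "0 < vec.dim T"
    and edge: "\<And>a b. a \<in> J \<Longrightarrow> b \<in> J \<Longrightarrow> cinner (u a) (u b) \<noteq> 0 \<Longrightarrow> G a b"
    and "i \<in> J"
  shows "min (Suc k) (Suc (vec.dim T)) \<le> card {j \<in> J. (G ^^ k) i j}"
proof (induction k)
  case 0
  have "{j \<in> J. (G ^^ 0) i j} = {i}"
    using \<open>i \<in> J\<close> by auto
  then show ?case by simp
next
  case (Suc k)
  define B where "B = {j \<in> J. (G ^^ k) i j}"
  define B' where "B' = {j \<in> J. (G ^^ Suc k) i j}"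
  have "finite B'"
    using generic_data_finite[OF gen] by (simp add: B'_def)
  have refl: "G j j" if "j \<in> J" for j
    using edge[OF that that] generic_data_nonzero[OF gen \<open>0 < vec.dim T\<close> that] by simp
  then have "B \<subseteq> B'"
    by (auto simp: B_def B'_def intro: relpowp_Suc_I)
  show ?case
  proof (cases "card B \<le> vec.dim T")
    case True
    have "(G ^^ k) i i"
      using relpowp_mono_refl[of G i 0 i k] refl \<open>i \<in> J\<close> by simp
    then have "B \<subseteq> J" "B \<noteq> {}"
      using \<open>i \<in> J\<close> by (auto simp: B_def)
    then obtain h g where "h \<in> B" "g \<in> J - B" "cinner (u h) (u g) \<noteq> 0"
      using generic_data_nonorthogonal_boundary[OF gen \<open>0 < vec.dim T\<close>] True by blast
    then have "insert g B \<subseteq> B'" "g \<notin> B"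
      using \<open>B \<subseteq> B'\<close> edge by (auto simp: B_def B'_def intro: relpowp_Suc_I)
    then have "Suc (card B) \<le> card B'"
      using \<open>finite B'\<close> card_mono[of B' "insert g B"] finite_subset[of B B']
      by (simp add: \<open>B \<subseteq> B'\<close>)
    then show ?thesis
      using Suc by (simp add: B_def B'_def)
  next
    case False
    then show ?thesis
      using card_mono[OF \<open>finite B'\<close> \<open>B \<subseteq> B'\<close>] by (simp add: B'_def)
  qed
qed

lemma generic_data_path:
  assumes gen: "generic_data T u J" and "0 < vec.dim T"
    and edge: "\<And>a b. a \<in> J \<Longrightarrow> b \<in> J \<Longrightarrow> cinner (u a) (u b) \<noteq> 0 \<Longrightarrow> G a b"
    and "i \<in> J" "j \<in> J" "vec.dim T \<le> k"
  shows "(G ^^ k) i j"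
proof -
  define d where "d = vec.dim T"
  have "d \<le> card {b \<in> J. (G ^^ (d - 1)) i b}"
    using generic_data_path_ball_card[OF gen \<open>0 < vec.dim T\<close> edge \<open>i \<in> J\<close>, where k = "d - 1"]
      \<open>0 < vec.dim T\<close> by (simp add: d_def)
  then obtain F where F: "F \<subseteq> {b \<in> J. (G ^^ (d - 1)) i b}" "card F = d" "finite F"
    by (rule obtain_subset_with_card_n)
  then obtain f where "f \<in> F" "cinner (u f) (u j) \<noteq> 0"
    using generic_data_nonorthogonal_to_basis[OF gen \<open>0 < vec.dim T\<close> _ _ \<open>j \<in> J\<close>, of F]
    by (auto simp: d_def)
  then have "(G ^^ Suc (d - 1)) i j"
    using F edge \<open>j \<in> J\<close> by (blast intro: relpowp_Suc_I)
  moreover have "G j j"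
    using edge[OF \<open>j \<in> J\<close> \<open>j \<in> J\<close>] generic_data_nonzero[OF gen \<open>0 < vec.dim T\<close> \<open>j \<in> J\<close>]
    by simp
  ultimately show ?thesis
    using relpowp_mono_refl[of G j "Suc (d - 1)" i k] \<open>0 < vec.dim T\<close> \<open>vec.dim T \<le> k\<close>
    by (simp add: d_def)
qed

end

section \<open>Clustering with the projection onto the row space\<close>

lemma column_matrix_matrix_mult: "column j (A ** B) = A *v column j B"
  by (simp add: vec_eq_iff matrix_vector_mult_def matrix_matrix_mult_def column_def)

lemma dim_pos_if_nonzero_subspace:
  assumes "vec.subspace S" "S \<noteq> {0}"
  shows "0 < vec.dim S"
  using assms vec.subspace_0 by fastforce

locale subspace_clustering = conjugation cj for cj :: "'a::real_normed_field \<Rightarrow> 'a" +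
  fixes M :: nat and S :: "nat \<Rightarrow> ('a^'m) set" and W :: "'a^'n^'m"
  assumes nonzero_subspaces: "\<forall>i<M. vec.subspace (S i) \<and> S i \<noteq> {0}"
    and independent: "independent_subspaces M S"
    and columns_in_union: "\<forall>j. column j W \<in> (\<Union>i<M. S i)"
    and generic: "\<forall>i<M. generic_data (S i) (\<lambda>j. column j W) {j. column j W \<in> S i}"
begin

abbreviation w :: "'n \<Rightarrow> 'a^'m" where
  "w j \<equiv> column j W"

definition P :: "'a^'n^'n" where
  "P = pinv cj W ** W"

definition u :: "'n \<Rightarrow> 'a^'n" where
  "u j = pinv cj W *v w j"

abbreviation dmax :: nat where
  "dmax \<equiv> Max ((\<lambda>i. vec.dim (S i)) ` {..<M})"

lemma W_pinv_W: "W ** pinv cj W ** W = W"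
  using is_pinv_pinv[of W] by (simp add: is_pinv_def)

lemma adj_P: "adj cj P = P"
  using is_pinv_pinv[of W] by (simp add: is_pinv_def P_def)

lemma W_u: "W *v u j = w j"
  using W_pinv_W
  by (simp add: u_def matrix_vector_mul_assoc matrix_mul_assoc flip: column_matrix_matrix_mult)

lemma u_component: "u j $ i = P $ i $ j"
  by (simp add: u_def P_def flip: column_matrix_matrix_mult) (simp add: column_def)

lemma P_entry: "P $ i $ j = cinner (u j) (u i)"
proof -
  have "P ** P = P"
    using is_pinv_pinv[of W] by (simp add: is_pinv_def P_def matrix_mul_assoc)
  then have "P $ i $ j = (adj cj P ** P) $ i $ j"
    by (simp add: adj_P)
  also have "\<dots> = (\<Sum>k\<in>UNIV. cj (P $ k $ i) * P $ k $ j)"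
    by (simp add: matrix_matrix_mult_def adj_def)
  finally show ?thesis
    by (simp add: cinner_def u_component mult.commute)
qed

lemma P_entry_commute: "P $ j $ i = cj (P $ i $ j)"
  using P_entry cinner_commute by metis

lemma P_neq_0_commute: "P $ j $ i \<noteq> 0 \<longleftrightarrow> P $ i $ j \<noteq> 0"
  using P_entry_commute[of i j] by simp

lemma norm_P_commute: "norm (P $ j $ i) = norm (P $ i $ j)"
  using P_entry_commute[of i j] by (simp add: norm_cj)

lemma u_orthogonal_kernel:
  assumes "W *v z = 0"
  shows "cinner (u j) z = 0"
proof -
  have "P *v z = 0"
    using assms by (simp add: P_def flip: matrix_vector_mul_assoc)
  moreover have "u j = P *v axis j 1"
    by (simp add: vec_eq_iff u_component matrix_vector_mult_def axis_def if_distrib cong: if_cong)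
  ultimately show ?thesis
    by (simp add: cinner_adj_right adj_P)
qed

definition restrict_cluster :: "nat \<Rightarrow> 'a^'n \<Rightarrow> 'a^'n" where
  "restrict_cluster l c = (\<chi> k. if w k \<in> S l then c $ k else 0)"

lemma W_restrict_cluster:
  assumes "l < M"
  shows "W *v restrict_cluster l c \<in> S l"
proof -
  have S_l: "vec.subspace (S l)"
    using nonzero_subspaces \<open>l < M\<close> by blast
  have "restrict_cluster l c $ k *s w k \<in> S l" for k
    using S_l by (simp add: restrict_cluster_def vec.subspace_scale vec.subspace_0)
  then show ?thesis
    unfolding matrix_mult_sum using S_l by (intro vec.subspace_sum)
qed

lemma W_restrict_cluster_complement:
  "W *v (c - restrict_cluster l c) \<in> vec.span (\<Union>i\<in>{..<M} - {l}. S i)"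
  unfolding matrix_mult_sum
proof (intro vec.span_sum)
  fix k
  show "(c - restrict_cluster l c) $ k *s w k \<in> vec.span (\<Union>i\<in>{..<M} - {l}. S i)"
  proof (cases "w k \<in> S l")
    case True
    then show ?thesis by (simp add: restrict_cluster_def vec.span_zero)
  next
    case False
    obtain i where "i < M" "w k \<in> S i"
      using columns_in_union by blast
    with False have "w k \<in> (\<Union>i\<in>{..<M} - {l}. S i)"
      by blast
    then show ?thesis
      by (intro vec.span_scale vec.span_base)
  qed
qed

lemma P_eq_0_outside_subspace:
  assumes "l < M" "w j \<in> S l" "w i \<notin> S l"
  shows "P $ i $ j = 0"
proof -
  define z where "z = u j - restrict_cluster l (u j)"
  have "W *v z = w j - W *v restrict_cluster l (u j)"
    by (simp add: z_def vec.diff W_u)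
  then have "W *v z \<in> S l"
    using nonzero_subspaces W_restrict_cluster \<open>l < M\<close> \<open>w j \<in> S l\<close>
    by (simp add: vec.subspace_diff)
  moreover have "W *v z \<in> vec.span (\<Union>i\<in>{..<M} - {l}. S i)"
    unfolding z_def by (rule W_restrict_cluster_complement)
  ultimately have "W *v z = 0"
    using independent_subspaces_Int_span[OF _ independent \<open>l < M\<close>] nonzero_subspaces by blast
  then have "cinner (u j) z = 0"
    by (rule u_orthogonal_kernel)
  moreover have "cinner (u j) z = cinner z z"
    unfolding cinner_def by (rule sum.cong) (simp_all add: z_def restrict_cluster_def)
  ultimately have "z $ i = 0"
    by simp
  then show ?thesis
    using \<open>w i \<notin> S l\<close> by (simp add: z_def restrict_cluster_def u_component)
qed

lemma P_neq_0_same_subspace: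
  assumes "P $ i $ j \<noteq> 0" "l < M" "w i \<in> S l"
  shows "w j \<in> S l"
  using P_eq_0_outside_subspace[OF assms(2,3), of j] P_entry_commute[of i j] assms(1) by auto

lemma P_path_iff_same_subspace:
  "((\<lambda>a b. P $ a $ b \<noteq> 0) ^^ dmax) i j \<longleftrightarrow> (\<exists>l<M. w i \<in> S l \<and> w j \<in> S l)"
proof
  assume path: "((\<lambda>a b. P $ a $ b \<noteq> 0) ^^ dmax) i j"
  obtain l where "l < M" "w i \<in> S l"
    using columns_in_union by blast
  moreover have "w j \<in> S l"
    using relpowp_invariant[where Q = "\<lambda>a. w a \<in> S l", OF _ path \<open>w i \<in> S l\<close>]
      P_neq_0_same_subspace[OF _ \<open>l < M\<close>] by blast
  ultimately show "\<exists>l<M. w i \<in> S l \<and> w j \<in> S l"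
    by blast
next
  assume "\<exists>l<M. w i \<in> S l \<and> w j \<in> S l"
  then obtain l where l: "l < M" "w i \<in> S l" "w j \<in> S l"
    by blast
  define J where "J = {k. w k \<in> S l}"
  have gen_w: "generic_data (S l) (\<lambda>k. w k) J"
    using generic \<open>l < M\<close> by (simp add: J_def)
  have u_eq: "u = (\<lambda>k. pinv cj W *v w k)"
    by (simp add: u_def fun_eq_iff)
  have W_pinv: "W *v (pinv cj W *v w k) = w k" for k
    using W_u by (simp add: u_def)
  have gen_u: "generic_data ((*v) (pinv cj W) ` S l) u J"
    unfolding u_eq using gen_w W_pinv by (rule generic_data_linear_image)
  have dim_u: "vec.dim ((*v) (pinv cj W) ` S l) = vec.dim (S l)"
    using gen_w W_pinv by (rule generic_data_linear_image)
  have "0 < vec.dim (S l)"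
    using nonzero_subspaces \<open>l < M\<close> by (simp add: dim_pos_if_nonzero_subspace)
  moreover have "vec.dim (S l) \<le> dmax"
    using \<open>l < M\<close> by (intro Max_ge) auto
  moreover have edge: "P $ a $ b \<noteq> 0" if "cinner (u a) (u b) \<noteq> 0" for a b
    using that P_entry_commute[of b a] by (simp add: P_entry)
  ultimately show "((\<lambda>a b. P $ a $ b \<noteq> 0) ^^ dmax) i j"
    using l by (intro generic_data_path[OF gen_u]) (auto simp: J_def dim_u)
qed

lemma similarity_matrix_mpow_of_real:
  fixes q :: "real^'n^'n"
  assumes nonneg: "\<And>i j. 0 \<le> q $ i $ j"
    and support: "\<And>i j. q $ i $ j \<noteq> 0 \<longleftrightarrow> P $ i $ j \<noteq> 0"
    and symmetric: "transpose q = q"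
  shows "similarity_matrix (mpow (\<chi> i j. of_real (q $ i $ j)) dmax) W M S"
  unfolding similarity_matrix_def
proof (intro conjI allI)
  have "transpose (\<chi> i j. of_real (q $ i $ j) :: 'a^'n^'n) = (\<chi> i j. of_real (q $ i $ j))"
    using symmetric by (simp add: transpose_def vec_eq_iff)
  then show "transpose (mpow (\<chi> i j. of_real (q $ i $ j) :: 'a^'n^'n) dmax)
      = mpow (\<chi> i j. of_real (q $ i $ j)) dmax"
    by (rule mpow_transpose)
  fix i j
  have "(\<lambda>a b. q $ a $ b \<noteq> 0) = (\<lambda>a b. P $ a $ b \<noteq> 0)"
    using support by blast
  then show "mpow (\<chi> i j. of_real (q $ i $ j) :: 'a^'n^'n) dmax $ i $ j \<noteq> 0
      \<longleftrightarrow> (\<exists>l<M. w i \<in> S l \<and> w j \<in> S l)"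
    by (simp add: mpow_of_real mpow_nonneg_neq_0_iff[OF nonneg] P_path_iff_same_subspace)
qed

lemma similarity_matrix_mpow_mbin: "similarity_matrix (mpow (mbin P) dmax) W M S"
proof -
  define q :: "real^'n^'n" where "q = (\<chi> i j. if P $ i $ j \<noteq> 0 then 1 else 0)"
  have "mbin P = (\<chi> i j. of_real (q $ i $ j))"
    by (simp add: mbin_def q_def vec_eq_iff)
  moreover have "similarity_matrix (mpow (\<chi> i j. of_real (q $ i $ j)) dmax) W M S"
    by (rule similarity_matrix_mpow_of_real)
      (simp_all add: q_def transpose_def vec_eq_iff P_neq_0_commute)
  ultimately show ?thesis
    by simp
qed

lemma similarity_matrix_mpow_mabs: "similarity_matrix (mpow (mabs P) dmax) W M S"
proof -
  define q :: "real^'n^'n" where "q = (\<chi> i j. norm (P $ i $ j))"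
  have "mabs P = (\<chi> i j. of_real (q $ i $ j))"
    by (simp add: mabs_def q_def)
  moreover have "similarity_matrix (mpow (\<chi> i j. of_real (q $ i $ j)) dmax) W M S"
    by (rule similarity_matrix_mpow_of_real)
      (simp_all add: q_def transpose_def vec_eq_iff norm_P_commute)
  ultimately show ?thesis
    by simp
qed

lemma P_eq_svd: "skinny_svd cj W U \<sigma> V \<Longrightarrow> P = V ** adj cj V"
  unfolding skinny_svd_def P_def using pinv_mult_svd by blast

end

lemma (in conjugation) pinv_similarity_matrices:
  "\<forall>(M::nat) (S :: nat \<Rightarrow> ('a^'m) set) (W :: 'a^'n^'m).
      (\<forall>i<M. vec.subspace (S i) \<and> S i \<noteq> {0}) \<and>
      independent_subspaces M S \<and>
      (\<forall>j. column j W \<in> (\<Union>i<M. S i)) \<and>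
      (\<forall>i<M. generic_data (S i) (\<lambda>j. column j W) {j. column j W \<in> S i})
      \<longrightarrow>
      (let dmax = Max ((\<lambda>i. vec.dim (S i)) ` {..<M}); P = pinv cj W ** W in
        similarity_matrix (mpow (mbin P) dmax) W M S \<and>
        similarity_matrix (mpow (mabs P) dmax) W M S \<and>
        (\<forall>(U :: 'a^'r::{finite,linorder}^'m) \<sigma> V.
           skinny_svd cj W U \<sigma> V \<longrightarrow> P = V ** adj cj V))"
proof (intro allI impI)
  fix M :: nat and S :: "nat \<Rightarrow> ('a^'m) set" and W :: "'a^'n^'m"
  assume "(\<forall>i<M. vec.subspace (S i) \<and> S i \<noteq> {0}) \<and> independent_subspaces M S \<and>
      (\<forall>j. column j W \<in> (\<Union>i<M. S i)) \<and>
      (\<forall>i<M. generic_data (S i) (\<lambda>j. column j W) {j. column j W \<in> S i})"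
  then interpret subspace_clustering cj M S W
    by unfold_locales blast+
  show "let dmax = Max ((\<lambda>i. vec.dim (S i)) ` {..<M}); P = pinv cj W ** W in
      similarity_matrix (mpow (mbin P) dmax) W M S \<and>
      similarity_matrix (mpow (mabs P) dmax) W M S \<and>
      (\<forall>(U :: 'a^'r::{finite,linorder}^'m) \<sigma> V.
         skinny_svd cj W U \<sigma> V \<longrightarrow> P = V ** adj cj V)"
    using similarity_matrix_mpow_mbin similarity_matrix_mpow_mabs P_eq_svd
    unfolding P_def Let_def by blast
qed

lemma conjugation_id: "conjugation (\<lambda>x::real. x)"
  by unfold_locales (simp_all add: power2_eq_square)

lemma conjugation_cnj: "conjugation cnj"
  by unfold_locales (simp_all add: complex_norm_square[symmetric])

theorem corollary4:
  shows
   "(\<forall>(M::nat) (S :: nat \<Rightarrow> (real^'m) set) (W :: real^'n^'m).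
      (\<forall>i<M. vec.subspace (S i) \<and> S i \<noteq> {0}) \<and>
      independent_subspaces M S \<and>
      (\<forall>j. column j W \<in> (\<Union>i<M. S i)) \<and>
      (\<forall>i<M. generic_data (S i) (\<lambda>j. column j W) {j. column j W \<in> S i})
      \<longrightarrow>
      (let dmax = Max ((\<lambda>i. vec.dim (S i)) ` {..<M}); P = pinv (\<lambda>x. x) W ** W in
        similarity_matrix (mpow (mbin P) dmax) W M S \<and>
        similarity_matrix (mpow (mabs P) dmax) W M S \<and>
        (\<forall>(U :: real^'r::{finite,linorder}^'m) \<sigma> V.
           skinny_svd (\<lambda>x. x) W U \<sigma> V \<longrightarrow> P = V ** adj (\<lambda>x. x) V)))
  \<and>
   (\<forall>(M::nat) (S :: nat \<Rightarrow> (complex^'m) set) (W :: complex^'n^'m).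
      (\<forall>i<M. vec.subspace (S i) \<and> S i \<noteq> {0}) \<and>
      independent_subspaces M S \<and>
      (\<forall>j. column j W \<in> (\<Union>i<M. S i)) \<and>
      (\<forall>i<M. generic_data (S i) (\<lambda>j. column j W) {j. column j W \<in> S i})
      \<longrightarrow>
      (let dmax = Max ((\<lambda>i. vec.dim (S i)) ` {..<M}); P = pinv cnj W ** W in
        similarity_matrix (mpow (mbin P) dmax) W M S \<and>
        similarity_matrix (mpow (mabs P) dmax) W M S \<and>
        (\<forall>(U :: complex^'r::{finite,linorder}^'m) \<sigma> V.
           skinny_svd cnj W U \<sigma> V \<longrightarrow> P = V ** adj cnj V)))"
  using conjugation.pinv_similarity_matrices[OF conjugation_id]
    conjugation.pinv_similarity_matrices[OF conjugation_cnj]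
  by blast

end
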